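(* Let $\varphi$ be a random dynamical system with memoryless noise on $X$ (setting in the context), let $\rho$ be a stationary probability measure of the Markov transition probabilities $(\varphi_x^t)$, and let $\mu_\rho$ be the unique past-measurable invariant measure of $\varphi$ satisfying $\pi_{X*}\mu_\rho=\rho$. Then $\mu_\rho$ is the only probability measure $\mu'$ on $(\Omega\times X,\mathcal{F}\otimes\mathcal{B}(X))$ that is invariant under $\Theta^t$ for all $t\in\mathbb{T}^+$ and whose restriction to $\mathcal{F}_0^\infty\otimes\mathcal{B}(X)$ coincides with $\mathbb{P}|_{\mathcal{F}_0^\infty}\otimes\rho$.
   Context: Setting. $\mathbb{T}$ is $\mathbb{Z}$ or $\mathbb{R}$, $\mathbb{T}^+ := \mathbb{T}\cap[0,\infty)$. $(\Omega,\mathcal{F})$ is a measurable space with sub-$\sigma$-algebras $(\mathcal{F}_s^{s+t})_{s\in\mathbb{T},t\in\mathbb{T}^+}$ such that $\mathcal{F}_{t_1}^{t_2}\subset\mathcal{F}_{t_0}^{t_3}$ whenever $t_0\le t_1\le t_2\le t_3$, and these generate $\mathcal{F}$. Write $\mathcal{F}_s^\infty:=\sigma(\mathcal{F}_s^{s+t}:t\in\mathbb{T}^+)$ and $\mathcal{F}_{-\infty}^t:=\sigma(\mathcal{F}_{t-s}^t:s\in\mathbb{T}^+)$. $(\theta^t)_{t\in\mathbb{T}}$ is a group of measurable maps $\Omega\to\Omega$ with $\theta^\tau\mathcal{F}_s^t=\mathcal{F}_{s-\tau}^{t-\tau}$. $\mathbb{P}$ is a probability measure on $(\Omega,\mathcal{F})$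 with $\theta^t_*\mathbb{P}=\mathbb{P}$, and such that for each $t$, $\mathcal{F}_{-\infty}^t$ and $\mathcal{F}_t^\infty$ are $\mathbb{P}$-independent. $(X,d)$ is a separable metric space which is a Borel subset of its $d$-completion. $\varphi=(\varphi(t,\omega))_{t\in\mathbb{T}^+,\omega\in\Omega}$ is a family of continuous maps $X\to X$ such that (a) $\omega\mapsto\varphi(t,\omega)x$ is $(\mathcal{F}_0^t,\mathcal{B}(X))$-measurable; (b) $\varphi(0,\omega)=\mathrm{id}_X$; (c) $\varphi(s+t,\omega)=\varphi(t,\theta^s\omega)\circ\varphi(s,\omega)$; (d) if $t_n\downarrow t$ in $\mathbb{T}^+$ and $x_n\to x$ then $\varphi(t_n,\omega)x_n\to\varphi(t,\omega)x$ for all $\omega$. Transition probabilities: $\varphi_x^t(A):=\mathbb{P}(\omega:\varphi(t,\omega)x\in A)$; $\rho$ is stationary if $\rho(A)=\int\varphi_x^t(A)\rho(dx)$ for all $t,A$. $\Theta^t(\omega,x):=(\theta^t\omega,\varphi(t,\omega)x)$; $\pi_\Omega,\pi_X$ are the projections of $\Omega\times X$. Definitions. A probability measure $\mu$ on $(\Omega\times X,\mathcal{F}\otimes\mathcal{B}(X))$ is $\mathbb{P}$-compatible if $\pi_{\Omega*}\mu=\mathbb{P}$; such $\mu$ has a disintegration $(\mu_\omega)_{\omega\in\Omega}$ (a measurable family of probability measures on $X$ with $\mu(A)=\int\mu_\omega(\{x:(\omega,x)\in A\})\mathbb{P}(d\omega)$), unique up to $\mathbb{P}$-a.e. equality. $\mu$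 is past-measurable if it admits a disintegration with $\omega\mapsto\mu_\omega(A)$ being $\mathcal{F}_{-\infty}^0$-measurable for all Borel $A$. An invariant measure of $\varphi$ is a $\mathbb{P}$-compatible probability measure invariant under all $\Theta^t$, $t\in\mathbb{T}^+$. It is known (and assumed here) that for each stationary $\rho$ there is a unique past-measurable invariant measure $\mu_\rho$ of $\varphi$ with $\pi_{X*}\mu_\rho=\rho$. *)

theory Defs
  imports "HOL-Probability.Probability"
begin

definition time_Z_or_R :: "'t::{linordered_ab_group_add,linorder_topology} itself \<Rightarrow> bool" where
  "time_Z_or_R _ \<longleftrightarrow>
     (\<exists>f::'t \<Rightarrow> int. bij f \<and> strict_mono f \<and> (\<forall>a b. f (a + b) = f a + f b)) \<or>
     (\<exists>f::'t \<Rightarrow> real. bij f \<and> strict_mono f \<and> (\<forall>a b. f (a + b) = f a + f b))"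

text \<open>F s u stands for the sigma-algebra F_s^u (s \<le> u).\<close>
definition future_alg :: "'w measure \<Rightarrow> ('t::linordered_ab_group_add \<Rightarrow> 't \<Rightarrow> 'w set set) \<Rightarrow> 't \<Rightarrow> 'w set set" where
  "future_alg M F s = sigma_sets (space M) (\<Union>t\<in>{t. 0 \<le> t}. F s (s + t))"

definition past_alg :: "'w measure \<Rightarrow> ('t::linordered_ab_group_add \<Rightarrow> 't \<Rightarrow> 'w set set) \<Rightarrow> 't \<Rightarrow> 'w set set" where
  "past_alg M F t = sigma_sets (space M) (\<Union>s\<in>{s. 0 \<le> s}. F (t - s) t)"

text \<open>The standing setting: memoryless noise (M = (Omega, F, P)) and an RDS phi on the
  separable metric space X, realised as a Borel subset of a Polish space 'c
  (namely of its completion); B(X) is the Borel sigma-algebra of X.\<close>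
definition memoryless_RDS ::
  "'w measure \<Rightarrow> ('t::{linordered_ab_group_add,linorder_topology} \<Rightarrow> 't \<Rightarrow> 'w set set)
    \<Rightarrow> ('t \<Rightarrow> 'w \<Rightarrow> 'w) \<Rightarrow> 'c::polish_space set \<Rightarrow> ('t \<Rightarrow> 'w \<Rightarrow> 'c \<Rightarrow> 'c) \<Rightarrow> bool" where
  "memoryless_RDS M F \<theta> X \<phi> \<longleftrightarrow>
     prob_space M \<and>
     (\<forall>s u. s \<le> u \<longrightarrow> sigma_algebra (space M) (F s u) \<and> F s u \<subseteq> sets M) \<and>
     (\<forall>t0 t1 t2 t3. t0 \<le> t1 \<and> t1 \<le> t2 \<and> t2 \<le> t3 \<longrightarrow> F t1 t2 \<subseteq> F t0 t3) \<and>
     sets M = sigma_sets (space M) (\<Union>s. \<Union>t\<in>{t. 0 \<le> t}. F s (s + t)) \<and>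
     (\<forall>\<omega>\<in>space M. \<theta> 0 \<omega> = \<omega>) \<and>
     (\<forall>s t. \<forall>\<omega>\<in>space M. \<theta> (s + t) \<omega> = \<theta> s (\<theta> t \<omega>)) \<and>
     (\<forall>t. \<theta> t \<in> measurable M M) \<and>
     (\<forall>\<tau> s u. s \<le> u \<longrightarrow> (\<lambda>A. \<theta> \<tau> ` A) ` F s u = F (s - \<tau>) (u - \<tau>)) \<and>
     (\<forall>t. distr M M (\<theta> t) = M) \<and>
     (\<forall>t. prob_space.indep_set M (past_alg M F t) (future_alg M F t)) \<and>
     X \<in> sets borel \<and>
     (\<forall>t\<ge>0. \<forall>\<omega>\<in>space M. \<phi> t \<omega> ` X \<subseteq> X \<and> continuous_on X (\<phi> t \<omega>)) \<and>
     (\<forall>t\<ge>0. \<forall>x\<in>X. (\<lambda>\<omega>. \<phi> t \<omega> x) \<in> measurable (sigma (space M) (F 0 t)) (restrict_space borel X)) \<and>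
     (\<forall>\<omega>\<in>space M. \<forall>x\<in>X. \<phi> 0 \<omega> x = x) \<and>
     (\<forall>s\<ge>0. \<forall>t\<ge>0. \<forall>\<omega>\<in>space M. \<forall>x\<in>X. \<phi> (s + t) \<omega> x = \<phi> t (\<theta> s \<omega>) (\<phi> s \<omega> x)) \<and>
     (\<forall>\<omega>\<in>space M. \<forall>(tn::nat \<Rightarrow> 't) t (xn::nat \<Rightarrow> 'c) x.
        t \<ge> 0 \<and> decseq tn \<and> (\<forall>n. tn n \<ge> t) \<and> tn \<longlonglongrightarrow> t \<and>
        (\<forall>n. xn n \<in> X) \<and> x \<in> X \<and> xn \<longlonglongrightarrow> x
        \<longrightarrow> (\<lambda>n. \<phi> (tn n) \<omega> (xn n)) \<longlonglongrightarrow> \<phi> t \<omega> x)"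

definition trans_prob :: "'w measure \<Rightarrow> ('t \<Rightarrow> 'w \<Rightarrow> 'c \<Rightarrow> 'c) \<Rightarrow> 't \<Rightarrow> 'c \<Rightarrow> 'c set \<Rightarrow> ennreal" where
  "trans_prob M \<phi> t x A = emeasure M {\<omega> \<in> space M. \<phi> t \<omega> x \<in> A}"

definition stationary ::
  "'w measure \<Rightarrow> 'c::topological_space set \<Rightarrow> ('t::linordered_ab_group_add \<Rightarrow> 'w \<Rightarrow> 'c \<Rightarrow> 'c) \<Rightarrow> 'c measure \<Rightarrow> bool" where
  "stationary M X \<phi> \<rho> \<longleftrightarrow> prob_space \<rho> \<and> sets \<rho> = sets (restrict_space borel X) \<and>
     (\<forall>t\<ge>0. \<forall>A\<in>sets (restrict_space borel X).
        emeasure \<rho> A = (\<integral>\<^sup>+ x. trans_prob M \<phi> t x A \<partial>\<rho>))"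

definition Theta :: "('t \<Rightarrow> 'w \<Rightarrow> 'w) \<Rightarrow> ('t \<Rightarrow> 'w \<Rightarrow> 'c \<Rightarrow> 'c) \<Rightarrow> 't \<Rightarrow> 'w \<times> 'c \<Rightarrow> 'w \<times> 'c" where
  "Theta \<theta> \<phi> t = (\<lambda>(\<omega>, x). (\<theta> t \<omega>, \<phi> t \<omega> x))"

definition Theta_invariant_prob ::
  "'w measure \<Rightarrow> 'c::topological_space set \<Rightarrow> ('t::linordered_ab_group_add \<Rightarrow> 'w \<Rightarrow> 'w)
    \<Rightarrow> ('t \<Rightarrow> 'w \<Rightarrow> 'c \<Rightarrow> 'c) \<Rightarrow> ('w \<times> 'c) measure \<Rightarrow> bool" where
  "Theta_invariant_prob M X \<theta> \<phi> \<mu> \<longleftrightarrow>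
     prob_space \<mu> \<and> sets \<mu> = sets (M \<Otimes>\<^sub>M restrict_space borel X) \<and>
     (\<forall>t\<ge>0. distr \<mu> (M \<Otimes>\<^sub>M restrict_space borel X) (Theta \<theta> \<phi> t) = \<mu>)"

definition P_compatible :: "'w measure \<Rightarrow> ('w \<times> 'c) measure \<Rightarrow> bool" where
  "P_compatible M \<mu> \<longleftrightarrow> distr \<mu> M fst = M"

definition invariant_measure ::
  "'w measure \<Rightarrow> 'c::topological_space set \<Rightarrow> ('t::linordered_ab_group_add \<Rightarrow> 'w \<Rightarrow> 'w)
    \<Rightarrow> ('t \<Rightarrow> 'w \<Rightarrow> 'c \<Rightarrow> 'c) \<Rightarrow> ('w \<times> 'c) measure \<Rightarrow> bool" where
  "invariant_measure M X \<theta> \<phi> \<mu> \<longleftrightarrow> Theta_invariant_prob M X \<theta> \<phi> \<mu> \<and> P_compatible M \<mu>"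

definition is_disintegration ::
  "'w measure \<Rightarrow> 'c::topological_space set \<Rightarrow> ('w \<times> 'c) measure \<Rightarrow> ('w \<Rightarrow> 'c measure) \<Rightarrow> bool" where
  "is_disintegration M X \<mu> K \<longleftrightarrow>
     (\<forall>\<omega>\<in>space M. prob_space (K \<omega>) \<and> sets (K \<omega>) = sets (restrict_space borel X)) \<and>
     (\<forall>A\<in>sets (restrict_space borel X). (\<lambda>\<omega>. emeasure (K \<omega>) A) \<in> borel_measurable M) \<and>
     (\<forall>A\<in>sets (M \<Otimes>\<^sub>M restrict_space borel X).
        emeasure \<mu> A = (\<integral>\<^sup>+ \<omega>. emeasure (K \<omega>) {x. (\<omega>, x) \<in> A} \<partial>M))"

definition past_measurable ::
  "'w measure \<Rightarrow> ('t::linordered_ab_group_add \<Rightarrow> 't \<Rightarrow> 'w set set) \<Rightarrow> 'c::topological_space set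
    \<Rightarrow> ('w \<times> 'c) measure \<Rightarrow> bool" where
  "past_measurable M F X \<mu> \<longleftrightarrow>
     (\<exists>K. is_disintegration M X \<mu> K \<and>
        (\<forall>A\<in>sets (restrict_space borel X).
           (\<lambda>\<omega>. emeasure (K \<omega>) A) \<in> borel_measurable (sigma (space M) (past_alg M F 0))))"

end

theory Submission
  imports Defs
begin

text \<open>Past-measurability makes the disintegration of \<open>\<mu>\<^sub>\<rho>\<close> a function of the past noise,
  which is independent of the future noise; hence \<open>\<mu>\<^sub>\<rho>(A \<times> B) = P(A) \<rho>(B)\<close> for every
  future event \<open>A\<close>. Conversely, for \<open>\<tau> \<ge> -s\<close> the preimage under \<open>\<Theta>\<^sup>\<tau>\<close> of a rectangle
  \<open>A \<times> B\<close> with \<open>A \<in> F\<^sub>s\<^sup>s\<^sup>+\<^sup>t\<close> lies in \<open>F\<^sub>0\<^sup>\<infinity> \<otimes> B(X)\<close>, so a \<open>\<Theta>\<close>-invariant measure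
  is determined on these rectangles, which generate \<open>F \<otimes> B(X)\<close>, by its restriction to
  \<open>F\<^sub>0\<^sup>\<infinity> \<otimes> B(X)\<close>.\<close>

lemma obtain_dense_sequence:
  fixes X :: "'c::{metric_space, second_countable_topology} set"
  assumes "X \<noteq> {}"
  obtains e :: "nat \<Rightarrow> 'c"
  where "range e \<subseteq> X" "\<And>x r. x \<in> X \<Longrightarrow> r > 0 \<Longrightarrow> \<exists>k. dist x (e k) < r"
proof -
  obtain B :: "'c set set" where B: "countable B" "topological_basis B"
    using ex_countable_basis by blast
  define D where "D = (\<lambda>b. SOME x. x \<in> b \<inter> X) ` {b\<in>B. b \<inter> X \<noteq> {}}"
  have "countable D" unfolding D_def using B(1) by auto
  have "D \<subseteq> X" unfolding D_def by (auto intro: someI2_ex)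
  have dense: "\<exists>d\<in>D. dist x d < r" if "x \<in> X" "r > 0" for x r
  proof -
    obtain b where b: "b \<in> B" "x \<in> b" "b \<subseteq> ball x r"
      using topological_basisE[OF B(2) open_ball centre_in_ball[THEN iffD2]] \<open>r > 0\<close> by metis
    then have "(SOME y. y \<in> b \<inter> X) \<in> D" "(SOME y. y \<in> b \<inter> X) \<in> b"
      unfolding D_def using \<open>x \<in> X\<close> by (auto intro: someI2_ex)
    with b show ?thesis by (meson mem_ball subsetD)
  qed
  with assms have "D \<noteq> {}" by (meson ex_in_conv zero_less_one)
  have "range (from_nat_into D) = D"
    using range_from_nat_into[OF \<open>D \<noteq> {}\<close> \<open>countable D\<close>] .
  with that[of "from_nat_into D"] \<open>D \<subseteq> X\<close> dense show ?thesis by (metis imageE)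
qed

lemma obtain_measurable_discrete_approximation:
  fixes X :: "'c::{metric_space, second_countable_topology} set"
  assumes "X \<noteq> {}"
  obtains e :: "nat \<Rightarrow> 'c" and g :: "nat \<Rightarrow> 'c \<Rightarrow> nat"
  where "range e \<subseteq> X" "\<And>n. g n \<in> measurable (restrict_space borel X) (count_space UNIV)"
    "\<And>x. x \<in> X \<Longrightarrow> (\<lambda>n. e (g n x)) \<longlonglongrightarrow> x"
proof -
  obtain e :: "nat \<Rightarrow> 'c" where eX: "range e \<subseteq> X"
    and dense: "\<And>x r. x \<in> X \<Longrightarrow> r > 0 \<Longrightarrow> \<exists>k. dist x (e k) < r"
    using obtain_dense_sequence[OF assms] by blast
  define g where "g n x = (LEAST k. dist x (e k) < 1 / real (Suc n))" for n x
  have "g n \<in> measurable (restrict_space borel X) (count_space UNIV)" for n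
    unfolding g_def
  proof (intro measurable_Least measurable_restrict_space1)
    fix k show "(\<lambda>x. dist x (e k) < 1 / real (Suc n)) \<in> borel \<rightarrow>\<^sub>M count_space UNIV"
      unfolding Measurable.pred_def
      by (intro borel_measurable_less borel_measurable_continuous_onI continuous_intros) simp
  qed
  moreover have "(\<lambda>n. e (g n x)) \<longlonglongrightarrow> x" if x: "x \<in> X" for x
  proof -
    have g_close: "dist x (e (g n x)) < 1 / real (Suc n)" for n
    proof -
      obtain k where "dist x (e k) < 1 / real (Suc n)" using dense[OF x, of "1 / real (Suc n)"] by auto
      then show ?thesis unfolding g_def by (rule LeastI)
    qed
    have "(\<lambda>n. dist (e (g n x)) x) \<longlonglongrightarrow> 0"
    proof (rule tendsto_sandwich[OF _ _ tendsto_const LIMSEQ_inverse_real_of_nat])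
      show "\<forall>\<^sub>F n in sequentially. 0 \<le> dist (e (g n x)) x" by simp
      show "\<forall>\<^sub>F n in sequentially. dist (e (g n x)) x \<le> inverse (real (Suc n))"
        using g_close by (simp add: dist_commute less_imp_le inverse_eq_divide)
    qed
    then show ?thesis by (rule tendsto_dist_iff[THEN iffD2])
  qed
  ultimately show ?thesis using that eX by blast
qed

text \<open>A Carath\'eodory function (measurable in the first, continuous in the second argument)
  is jointly measurable: it is the pointwise limit of its compositions with a measurable
  discrete approximation of the identity of \<open>X\<close>.\<close>

lemma measurable_uncurry_continuous_on:
  fixes f :: "'a \<Rightarrow> 'c::{metric_space, second_countable_topology} \<Rightarrow> 'c"
  assumes meas: "\<And>x. x \<in> X \<Longrightarrow> (\<lambda>\<omega>. f \<omega> x) \<in> measurable N (restrict_space borel X)"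
    and cont: "\<And>\<omega>. \<omega> \<in> space N \<Longrightarrow> continuous_on X (f \<omega>)"
    and maps: "\<And>\<omega>. \<omega> \<in> space N \<Longrightarrow> f \<omega> ` X \<subseteq> X"
  shows "(\<lambda>p. f (fst p) (snd p)) \<in> measurable (N \<Otimes>\<^sub>M restrict_space borel X) (restrict_space borel X)"
proof (cases "X = {}")
  case True
  then show ?thesis by (simp add: measurable_empty_iff space_pair_measure space_restrict_space)
next
  case False
  obtain e :: "nat \<Rightarrow> 'c" and g where eX: "range e \<subseteq> X"
    and g_meas: "\<And>n. g n \<in> measurable (restrict_space borel X) (count_space UNIV)"
    and g_lim: "\<And>x. x \<in> X \<Longrightarrow> (\<lambda>n. e (g n x)) \<longlonglongrightarrow> x"
    using obtain_measurable_discrete_approximation[OF False] by blast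
  have "(\<lambda>p. f (fst p) (e (g n (snd p))))
      \<in> measurable (N \<Otimes>\<^sub>M restrict_space borel X) (restrict_space borel X)" for n
  proof (rule measurable_compose_countable[where f="\<lambda>k p. f (fst p) (e k)"])
    show "(\<lambda>p. f (fst p) (e k)) \<in> measurable (N \<Otimes>\<^sub>M restrict_space borel X) (restrict_space borel X)"
      for k using eX by (intro measurable_fst''[OF meas]) auto
    show "(\<lambda>p. g n (snd p)) \<in> measurable (N \<Otimes>\<^sub>M restrict_space borel X) (count_space UNIV)"
      using g_meas by (rule measurable_snd'')
  qed
  then have approx_meas: "(\<lambda>p. f (fst p) (e (g n (snd p))))
      \<in> borel_measurable (N \<Otimes>\<^sub>M restrict_space borel X)" for n
    by (simp add: measurable_restrict_space2_iff)
  have lim: "(\<lambda>n. f \<omega> (e (g n x))) \<longlonglongrightarrow> f \<omega> x" if "\<omega> \<in> space N" "x \<in> X" for \<omega> x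
    using eX by (intro continuous_on_tendsto_compose[OF cont[OF that(1)] g_lim[OF that(2)] that(2)]
        always_eventually) auto
  have "(\<lambda>p. f (fst p) (snd p)) \<in> borel_measurable (N \<Otimes>\<^sub>M restrict_space borel X)"
    by (rule borel_measurable_LIMSEQ_metric[OF approx_meas lim])
       (auto simp: space_pair_measure space_restrict_space)
  moreover have "(\<lambda>p. f (fst p) (snd p)) \<in> space (N \<Otimes>\<^sub>M restrict_space borel X) \<rightarrow> X"
    using maps by (fastforce simp: space_pair_measure space_restrict_space)
  ultimately show ?thesis by (simp add: measurable_restrict_space2_iff)
qed

lemma (in prob_space) nn_integral_indep_set_mult:
  fixes f h :: "'a \<Rightarrow> ennreal"
  assumes ind: "indep_set A B"
    and "sigma_algebra (space M) A" "sigma_algebra (space M) B"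
    and f: "f \<in> borel_measurable (sigma (space M) A)"
    and h: "h \<in> borel_measurable (sigma (space M) B)"
  shows "(\<integral>\<^sup>+\<omega>. f \<omega> * h \<omega> \<partial>M) = (\<integral>\<^sup>+\<omega>. f \<omega> \<partial>M) * (\<integral>\<^sup>+\<omega>. h \<omega> \<partial>M)"
proof -
  have sets_A: "sets (sigma (space M) A) = A" and sets_B: "sets (sigma (space M) B) = B"
    using assms(2,3) by (simp_all add: sigma_algebra.sets_measure_of_eq)
  have sub_A: "subalgebra M (sigma (space M) A)" and sub_B: "subalgebra M (sigma (space M) B)"
    using indep_setD_ev1[OF ind] indep_setD_ev2[OF ind] sets_A sets_B
    by (auto simp: subalgebra_def space_measure_of_conv)
  define Y where "Y = case_bool f h"
  have "indep_vars (\<lambda>_. borel) Y UNIV"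
    unfolding indep_vars_def2
  proof
    show "\<forall>i\<in>UNIV. random_variable borel (Y i)"
      using measurable_from_subalg[OF sub_A f] measurable_from_subalg[OF sub_B h]
      by (auto simp: Y_def split: bool.split)
    show "indep_sets (\<lambda>i. {Y i -` S \<inter> space M |S. S \<in> sets borel}) UNIV"
      using measurable_sets[OF f] measurable_sets[OF h] sets_A sets_B
        subalgebra_def[of M] sub_A sub_B
      by (intro indep_sets_mono_sets[OF ind[unfolded indep_set_def]])
         (auto simp: Y_def split: bool.split)
  qed
  then have "(\<integral>\<^sup>+\<omega>. (\<Prod>i\<in>UNIV. Y i \<omega>) \<partial>M) = (\<Prod>i\<in>UNIV. \<integral>\<^sup>+\<omega>. Y i \<omega> \<partial>M)"
    by (intro indep_vars_nn_integral) auto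
  then show ?thesis by (simp add: UNIV_bool Y_def mult.commute)
qed

lemma subalgebra_pair_measure:
  assumes "subalgebra A A'"
  shows "subalgebra (A \<Otimes>\<^sub>M B) (A' \<Otimes>\<^sub>M B)"
  using assms unfolding subalgebra_def
  by (auto simp: space_pair_measure intro!: sets_pair_in_sets)

lemma emeasure_eq_pair_measure_on_subalgebra:
  assumes "prob_space M" "subalgebra M N" "sigma_finite_measure \<rho>"
    and sets_\<mu>: "sets \<mu> = sets (M \<Otimes>\<^sub>M \<rho>)"
    and rect: "\<And>A B. A \<in> sets N \<Longrightarrow> B \<in> sets \<rho> \<Longrightarrow> emeasure \<mu> (A \<times> B) = emeasure M A * emeasure \<rho> B"
    and C: "C \<in> sets (N \<Otimes>\<^sub>M \<rho>)"
  shows "emeasure \<mu> C = emeasure (restr_to_subalg M N \<Otimes>\<^sub>M \<rho>) C"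
proof -
  have sub_\<mu>: "subalgebra \<mu> (N \<Otimes>\<^sub>M \<rho>)"
    using subalgebra_pair_measure[OF \<open>subalgebra M N\<close>] sets_\<mu> sets_eq_imp_space_eq[OF sets_\<mu>]
    by (simp add: subalgebra_def)
  have "restr_to_subalg M N \<Otimes>\<^sub>M \<rho> = restr_to_subalg \<mu> (N \<Otimes>\<^sub>M \<rho>)"
  proof (rule pair_measure_eqI)
    show "sigma_finite_measure (restr_to_subalg M N)"
      using assms(1,2) by (intro prob_space_imp_sigma_finite prob_space_restr_to_subalg)
    show "sets (restr_to_subalg M N \<Otimes>\<^sub>M \<rho>) = sets (restr_to_subalg \<mu> (N \<Otimes>\<^sub>M \<rho>))"
      using assms(2) sub_\<mu> by (simp add: sets_restr_to_subalg cong: sets_pair_measure_cong)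
    fix A B assume "A \<in> sets (restr_to_subalg M N)" "B \<in> sets \<rho>"
    with assms(2) sub_\<mu> rect show "emeasure (restr_to_subalg M N) A * emeasure \<rho> B
        = emeasure (restr_to_subalg \<mu> (N \<Otimes>\<^sub>M \<rho>)) (A \<times> B)"
      by (simp add: sets_restr_to_subalg emeasure_restr_to_subalg)
  qed fact
  with sub_\<mu> C show ?thesis by (simp add: emeasure_restr_to_subalg)
qed

locale memoryless_rds =
  fixes M :: "'w measure"
    and F :: "'t::{linordered_ab_group_add,linorder_topology} \<Rightarrow> 't \<Rightarrow> 'w set set"
    and \<theta> :: "'t \<Rightarrow> 'w \<Rightarrow> 'w"
    and X :: "'c::polish_space set"
    and \<phi> :: "'t \<Rightarrow> 'w \<Rightarrow> 'c \<Rightarrow> 'c"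
  assumes memoryless_RDS: "memoryless_RDS M F \<theta> X \<phi>"
begin

abbreviation borel_X :: "'c measure" where
  "borel_X \<equiv> restrict_space borel X"

abbreviation future :: "'w measure" where
  "future \<equiv> sigma (space M) (future_alg M F 0)"

abbreviation windows :: "'w set set" where
  "windows \<equiv> \<Union>s. \<Union>t\<in>{t. 0 \<le> t}. F s (s + t)"

abbreviation window_rectangles :: "('w \<times> 'c) set set" where
  "window_rectangles \<equiv> {a \<times> b |a b. a \<in> windows \<and> b \<in> sets borel_X}"

sublocale prob_space M
  using memoryless_RDS unfolding memoryless_RDS_def by blast

lemma sigma_algebra_F: "s \<le> u \<Longrightarrow> sigma_algebra (space M) (F s u)"
  and F_mono: "t0 \<le> t1 \<Longrightarrow> t1 \<le> t2 \<Longrightarrow> t2 \<le> t3 \<Longrightarrow> F t1 t2 \<subseteq> F t0 t3"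
  using memoryless_RDS unfolding memoryless_RDS_def by simp_all

lemma F_subset_sets: "s \<le> u \<Longrightarrow> F s u \<subseteq> sets M"
  using memoryless_RDS unfolding memoryless_RDS_def by (elim conjE) metis

lemma F_subset_Pow: "s \<le> u \<Longrightarrow> F s u \<subseteq> Pow (space M)"
  using F_subset_sets sets.space_closed by (rule order_trans)

lemma sets_eq_sigma_windows: "sets M = sigma_sets (space M) windows"
  using memoryless_RDS unfolding memoryless_RDS_def by (elim conjE) assumption

lemma theta_zero: "\<omega> \<in> space M \<Longrightarrow> \<theta> 0 \<omega> = \<omega>"
  and theta_add: "\<omega> \<in> space M \<Longrightarrow> \<theta> (s + t) \<omega> = \<theta> s (\<theta> t \<omega>)"
  and measurable_theta: "\<theta> t \<in> measurable M M"
  and image_theta_F: "s \<le> u \<Longrightarrow> (\<lambda>A. \<theta> \<tau> ` A) ` F s u = F (s - \<tau>) (u - \<tau>)"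
  and indep_past_future: "indep_set (past_alg M F t) (future_alg M F t)"
  using memoryless_RDS unfolding memoryless_RDS_def by simp_all

lemma phi_maps: "0 \<le> t \<Longrightarrow> \<omega> \<in> space M \<Longrightarrow> \<phi> t \<omega> ` X \<subseteq> X"
  and continuous_on_phi: "0 \<le> t \<Longrightarrow> \<omega> \<in> space M \<Longrightarrow> continuous_on X (\<phi> t \<omega>)"
  and measurable_phi: "0 \<le> t \<Longrightarrow> x \<in> X \<Longrightarrow> (\<lambda>\<omega>. \<phi> t \<omega> x) \<in> measurable (sigma (space M) (F 0 t)) borel_X"
  using memoryless_RDS unfolding memoryless_RDS_def by simp_all

lemma theta_inverse: "\<omega> \<in> space M \<Longrightarrow> \<theta> (- \<tau>) (\<theta> \<tau> \<omega>) = \<omega>"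
  using theta_add[of \<omega> "- \<tau>" \<tau>] theta_zero[of \<omega>] by simp

lemma image_theta_eq_vimage:
  assumes "a \<subseteq> space M"
  shows "\<theta> (- \<tau>) ` a = {\<omega> \<in> space M. \<theta> \<tau> \<omega> \<in> a}"
proof -
  have "\<theta> (- \<tau>) ` a \<subseteq> space M"
    using assms measurable_space[OF measurable_theta] by blast
  moreover have "\<theta> \<tau> (\<theta> (- \<tau>) \<omega>) = \<omega>" if "\<omega> \<in> space M" for \<omega>
    using theta_inverse[OF that, of "- \<tau>"] by simp
  ultimately show ?thesis
    using assms theta_inverse by (auto intro!: image_eqI)
qed

lemma windows_subset_Pow: "windows \<subseteq> Pow (space M)"
  by (intro UN_least F_subset_Pow) simp

lemma sets_borel_X_subset_Pow: "sets borel_X \<subseteq> Pow X"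
  using sets.space_closed[of borel_X] by (simp add: space_restrict_space)

lemma space_in_windows: "space M \<in> windows"
proof -
  interpret sigma_algebra "space M" "F 0 (0 + 0)" by (rule sigma_algebra_F) simp
  show ?thesis using top by blast
qed

lemma Int_stable_windows: "Int_stable windows"
proof (rule Int_stableI)
  fix a1 a2 assume "a1 \<in> windows" "a2 \<in> windows"
  then obtain s1 t1 s2 t2 where 1: "0 \<le> t1" "a1 \<in> F s1 (s1 + t1)"
    and 2: "0 \<le> t2" "a2 \<in> F s2 (s2 + t2)"
    by blast
  define s u where "s = min s1 s2" and "u = max (s1 + t1) (s2 + t2)"
  have "s \<le> u" using 1(1) by (simp add: s_def u_def min.coboundedI1 le_max_iff_disj)
  then interpret sigma_algebra "space M" "F s u" by (rule sigma_algebra_F)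
  have "a1 \<in> F s u" "a2 \<in> F s u"
    using 1 2 F_mono[of s s1 "s1 + t1" u] F_mono[of s s2 "s2 + t2" u] by (auto simp: s_def u_def)
  then have "a1 \<inter> a2 \<in> F s (s + (u - s))" by auto
  moreover have "0 \<le> u - s" using \<open>s \<le> u\<close> by simp
  ultimately show "a1 \<inter> a2 \<in> windows" by blast
qed

lemma Int_stable_window_rectangles: "Int_stable window_rectangles"
proof (rule Int_stableI)
  fix R1 R2 assume "R1 \<in> window_rectangles" "R2 \<in> window_rectangles"
  then obtain a1 b1 a2 b2 where "R1 = a1 \<times> b1" "R2 = a2 \<times> b2" "a1 \<in> windows" "a2 \<in> windows"
    "b1 \<in> sets borel_X" "b2 \<in> sets borel_X"
    by blast
  then have "R1 \<inter> R2 = (a1 \<inter> a2) \<times> (b1 \<inter> b2)" "a1 \<inter> a2 \<in> windows" "b1 \<inter> b2 \<in> sets borel_X"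
    using Int_stableD[OF Int_stable_windows] by auto
  then show "R1 \<inter> R2 \<in> window_rectangles" by (intro CollectI exI conjI)
qed

lemma window_rectangles_subset_Pow: "window_rectangles \<subseteq> Pow (space M \<times> X)"
proof
  fix R assume "R \<in> window_rectangles"
  then obtain a b where "R = a \<times> b" "a \<in> windows" "b \<in> sets borel_X" by blast
  then show "R \<in> Pow (space M \<times> X)"
    using subsetD[OF windows_subset_Pow] subsetD[OF sets_borel_X_subset_Pow] by blast
qed

lemma sets_pair_eq_sigma_window_rectangles:
  "sets (M \<Otimes>\<^sub>M borel_X) = sigma_sets (space M \<times> X) window_rectangles"
proof -
  have "sets (sigma X (sets borel_X)) = sets borel_X"
    using sets.sigma_sets_eq[of borel_X] sets_borel_X_subset_Pow by (simp add: space_restrict_space)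
  then have "sets (M \<Otimes>\<^sub>M borel_X) = sets (sigma (space M) windows \<Otimes>\<^sub>M sigma X (sets borel_X))"
    using windows_subset_Pow by (intro sets_pair_measure_cong) (simp_all add: sets_eq_sigma_windows)
  also have "\<dots> = sets (sigma (space M \<times> X) window_rectangles)"
  proof (rule arg_cong[where f=sets], rule sigma_prod)
    show "\<exists>E\<subseteq>windows. countable E \<and> space M = \<Union>E"
      using space_in_windows by (intro exI[of _ "{space M}"]) auto
    show "\<exists>E\<subseteq>sets borel_X. countable E \<and> X = \<Union>E"
      using sets.top[of borel_X] by (intro exI[of _ "{X}"]) (auto simp: space_restrict_space)
  qed (rule windows_subset_Pow sets_borel_X_subset_Pow)+
  also have "\<dots> = sigma_sets (space M \<times> X) window_rectangles"
    using windows_subset_Pow sets_borel_X_subset_Pow by (intro sets_measure_of) blast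
  finally show ?thesis .
qed

lemma sigma_algebra_future_alg: "sigma_algebra (space M) (future_alg M F t)"
  unfolding future_alg_def by (intro sigma_algebra_sigma_sets UN_least F_subset_Pow) simp

lemma sigma_algebra_past_alg: "sigma_algebra (space M) (past_alg M F t)"
  unfolding past_alg_def by (intro sigma_algebra_sigma_sets UN_least F_subset_Pow) simp

lemma sets_future: "sets future = future_alg M F 0"
  using sigma_algebra_future_alg by (rule sigma_algebra.sets_measure_of_eq)

lemma space_future: "space future = space M"
  by (simp add: space_measure_of_conv)

lemma subalgebra_future: "subalgebra M future"
proof -
  have "future_alg M F 0 \<subseteq> sets M"
    unfolding future_alg_def by (intro sets.sigma_sets_subset UN_least F_subset_sets) simp
  then show ?thesis by (simp add: subalgebra_def sets_future space_future)
qed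

lemma F_subset_future:
  assumes "0 \<le> u"
  shows "F 0 u \<subseteq> sets future"
proof
  fix x assume "x \<in> F 0 u"
  with assms have "x \<in> (\<Union>t\<in>{t. 0 \<le> t}. F 0 (0 + t))" by auto
  then have "x \<in> future_alg M F 0" unfolding future_alg_def by (rule sigma_sets.Basic)
  then show "x \<in> sets future" by (simp add: sets_future)
qed

lemma measurable_phi_future:
  assumes "0 \<le> \<tau>"
  shows "(\<lambda>p. \<phi> \<tau> (fst p) (snd p)) \<in> measurable (future \<Otimes>\<^sub>M borel_X) borel_X"
proof -
  have space_F: "space (sigma (space M) (F 0 \<tau>)) = space M"
    by (simp add: space_measure_of_conv)
  have "(\<lambda>p. \<phi> \<tau> (fst p) (snd p)) \<in> measurable (sigma (space M) (F 0 \<tau>) \<Otimes>\<^sub>M borel_X) borel_X"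
    using assms
    by (intro measurable_uncurry_continuous_on measurable_phi continuous_on_phi phi_maps)
       (simp_all add: space_F)
  moreover have "subalgebra (future \<Otimes>\<^sub>M borel_X) (sigma (space M) (F 0 \<tau>) \<Otimes>\<^sub>M borel_X)"
    using F_subset_future[OF assms] sigma_algebra_F[of 0 \<tau>] assms
    by (intro subalgebra_pair_measure)
       (simp add: subalgebra_def space_F space_future sigma_algebra.sets_measure_of_eq)
  ultimately show ?thesis by (rule measurable_from_subalg[rotated])
qed

lemma measurable_Theta:
  assumes "0 \<le> \<tau>"
  shows "Theta \<theta> \<phi> \<tau> \<in> measurable (M \<Otimes>\<^sub>M borel_X) (M \<Otimes>\<^sub>M borel_X)"
proof -
  have "(\<lambda>p. \<phi> \<tau> (fst p) (snd p)) \<in> measurable (M \<Otimes>\<^sub>M borel_X) borel_X"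
    using measurable_from_subalg[OF subalgebra_pair_measure[OF subalgebra_future]
        measurable_phi_future[OF assms]] .
  then have "(\<lambda>p. (\<theta> \<tau> (fst p), \<phi> \<tau> (fst p) (snd p))) \<in> measurable (M \<Otimes>\<^sub>M borel_X) (M \<Otimes>\<^sub>M borel_X)"
    using measurable_theta[of \<tau>] by measurable
  then show ?thesis by (simp add: Theta_def case_prod_beta')
qed

lemma image_theta_in_future:
  assumes "a \<in> F s u" "s \<le> u" "0 \<le> s + \<tau>"
  shows "\<theta> (- \<tau>) ` a \<in> sets future"
proof -
  have "\<theta> (- \<tau>) ` a \<in> F (s + \<tau>) (u + \<tau>)"
    using image_theta_F[of s u "- \<tau>"] assms(1,2) by auto
  also have "\<dots> \<subseteq> F 0 (u + \<tau>)"
    using assms(2,3) by (intro F_mono) auto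
  also have "\<dots> \<subseteq> sets future"
    using assms(2,3) by (intro F_subset_future order_trans[OF assms(3) add_right_mono])
  finally show ?thesis .
qed

lemma Theta_vimage_window_rectangle_in_future:
  assumes a: "a \<in> F s u" "s \<le> u" and \<tau>: "0 \<le> \<tau>" "0 \<le> s + \<tau>" and b: "b \<in> sets borel_X"
  shows "Theta \<theta> \<phi> \<tau> -` (a \<times> b) \<inter> (space M \<times> X) \<in> sets (future \<Otimes>\<^sub>M borel_X)"
proof -
  have "a \<subseteq> space M" using F_subset_Pow[OF a(2)] a(1) by blast
  then have "Theta \<theta> \<phi> \<tau> -` (a \<times> b) \<inter> (space M \<times> X)
      = (\<theta> (- \<tau>) ` a \<times> X) \<inter> ((\<lambda>p. \<phi> \<tau> (fst p) (snd p)) -` b \<inter> space (future \<Otimes>\<^sub>M borel_X))"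
    by (auto simp: image_theta_eq_vimage Theta_def space_pair_measure space_future space_restrict_space)
  also have "\<dots> \<in> sets (future \<Otimes>\<^sub>M borel_X)"
  proof (rule sets.Int)
    show "\<theta> (- \<tau>) ` a \<times> X \<in> sets (future \<Otimes>\<^sub>M borel_X)"
      using image_theta_in_future[OF a \<tau>(2)] sets.top[of borel_X]
      by (auto simp: space_restrict_space)
    show "(\<lambda>p. \<phi> \<tau> (fst p) (snd p)) -` b \<inter> space (future \<Otimes>\<^sub>M borel_X) \<in> sets (future \<Otimes>\<^sub>M borel_X)"
      using measurable_phi_future[OF \<tau>(1)] b by (rule measurable_sets)
  qed
  finally show ?thesis .
qed

lemma emeasure_Theta_vimage:
  assumes \<nu>: "Theta_invariant_prob M X \<theta> \<phi> \<nu>" and "0 \<le> \<tau>" and A: "A \<in> sets (M \<Otimes>\<^sub>M borel_X)"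
  shows "emeasure \<nu> (Theta \<theta> \<phi> \<tau> -` A \<inter> (space M \<times> X)) = emeasure \<nu> A"
proof -
  have sets_\<nu>: "sets \<nu> = sets (M \<Otimes>\<^sub>M borel_X)"
    and invariant: "distr \<nu> (M \<Otimes>\<^sub>M borel_X) (Theta \<theta> \<phi> \<tau>) = \<nu>"
    using \<nu> \<open>0 \<le> \<tau>\<close> unfolding Theta_invariant_prob_def by auto
  have "space \<nu> = space M \<times> X"
    using sets_eq_imp_space_eq[OF sets_\<nu>] by (simp add: space_pair_measure space_restrict_space)
  moreover have "Theta \<theta> \<phi> \<tau> \<in> measurable \<nu> (M \<Otimes>\<^sub>M borel_X)"
    using measurable_Theta[OF \<open>0 \<le> \<tau>\<close>] sets_\<nu> by (simp cong: measurable_cong_sets)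
  ultimately have "emeasure \<nu> (Theta \<theta> \<phi> \<tau> -` A \<inter> (space M \<times> X))
      = emeasure (distr \<nu> (M \<Otimes>\<^sub>M borel_X) (Theta \<theta> \<phi> \<tau>)) A"
    using A by (simp add: emeasure_distr)
  then show ?thesis by (simp add: invariant)
qed

lemma Theta_invariant_eqI_future:
  assumes \<nu>1: "Theta_invariant_prob M X \<theta> \<phi> \<nu>1" and \<nu>2: "Theta_invariant_prob M X \<theta> \<phi> \<nu>2"
    and eq: "\<And>A. A \<in> sets (future \<Otimes>\<^sub>M borel_X) \<Longrightarrow> emeasure \<nu>1 A = emeasure \<nu>2 A"
  shows "\<nu>1 = \<nu>2"
proof (rule measure_eqI_generator_eq[OF Int_stable_window_rectangles window_rectangles_subset_Pow,
      where A="\<lambda>_. space M \<times> X"])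
  show "sets \<nu>1 = sigma_sets (space M \<times> X) window_rectangles"
    and "sets \<nu>2 = sigma_sets (space M \<times> X) window_rectangles"
    using \<nu>1 \<nu>2 sets_pair_eq_sigma_window_rectangles by (simp_all add: Theta_invariant_prob_def)
  show "range (\<lambda>_. space M \<times> X) \<subseteq> window_rectangles"
    using space_in_windows sets.top[of borel_X] by (auto simp: space_restrict_space)
  show "emeasure \<nu>1 (space M \<times> X) \<noteq> \<infinity>"
  proof -
    interpret \<nu>1: prob_space \<nu>1 using \<nu>1 by (simp add: Theta_invariant_prob_def)
    show ?thesis using \<nu>1.emeasure_finite[of "space M \<times> X"] by simp
  qed
  fix R assume "R \<in> window_rectangles"
  then obtain a b s t where R: "R = a \<times> b" and a: "a \<in> F s (s + t)" "0 \<le> t"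
    and b: "b \<in> sets borel_X"
    by blast
  define \<tau> where "\<tau> = max 0 (- s)"
  have \<tau>: "0 \<le> \<tau>" "0 \<le> s + \<tau>" by (auto simp: \<tau>_def max_def)
  have "a \<in> sets M" using F_subset_sets[of s "s + t"] a by auto
  then have R_sets: "R \<in> sets (M \<Otimes>\<^sub>M borel_X)" using R b by simp
  have "emeasure \<nu>1 R = emeasure \<nu>1 (Theta \<theta> \<phi> \<tau> -` R \<inter> (space M \<times> X))"
    using emeasure_Theta_vimage[OF \<nu>1 \<tau>(1) R_sets] ..
  also have "\<dots> = emeasure \<nu>2 (Theta \<theta> \<phi> \<tau> -` R \<inter> (space M \<times> X))"
    unfolding R using a by (intro eq Theta_vimage_window_rectangle_in_future[OF a(1) _ \<tau> b]) simp
  also have "\<dots> = emeasure \<nu>2 R"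
    using emeasure_Theta_vimage[OF \<nu>2 \<tau>(1) R_sets] .
  finally show "emeasure \<nu>1 R = emeasure \<nu>2 R" .
qed (simp)

lemma emeasure_future_Times:
  assumes past: "past_measurable M F X \<mu>" and sets_\<mu>: "sets \<mu> = sets (M \<Otimes>\<^sub>M borel_X)"
    and marginal: "distr \<mu> borel_X snd = \<rho>"
    and A: "A \<in> sets future" and B: "B \<in> sets borel_X"
  shows "emeasure \<mu> (A \<times> B) = emeasure M A * emeasure \<rho> B"
proof -
  obtain K where K: "is_disintegration M X \<mu> K"
    and K_past: "(\<lambda>\<omega>. emeasure (K \<omega>) B) \<in> borel_measurable (sigma (space M) (past_alg M F 0))"
    using past B unfolding past_measurable_def by blast
  have disintegrate: "emeasure \<mu> C = (\<integral>\<^sup>+\<omega>. emeasure (K \<omega>) {x. (\<omega>, x) \<in> C} \<partial>M)"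
    if "C \<in> sets (M \<Otimes>\<^sub>M borel_X)" for C
    using K that unfolding is_disintegration_def by blast
  have A_sets: "A \<in> sets M" using A subalgebra_future by (auto simp: subalgebra_def)
  have B_sub: "B \<subseteq> X" using B sets_borel_X_subset_Pow by blast
  have "emeasure \<rho> B = emeasure \<mu> (snd -` B \<inter> space \<mu>)"
    unfolding marginal[symmetric] using B sets_\<mu> by (simp add: emeasure_distr cong: measurable_cong_sets)
  also have "snd -` B \<inter> space \<mu> = space M \<times> B"
    using sets_eq_imp_space_eq[OF sets_\<mu>] B_sub by (auto simp: space_pair_measure space_restrict_space)
  also have "emeasure \<mu> (space M \<times> B) = (\<integral>\<^sup>+\<omega>. emeasure (K \<omega>) B \<partial>M)"
    using B by (subst disintegrate) (auto intro!: nn_integral_cong)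
  finally have \<rho>_B: "emeasure \<rho> B = (\<integral>\<^sup>+\<omega>. emeasure (K \<omega>) B \<partial>M)" .
  have "emeasure \<mu> (A \<times> B) = (\<integral>\<^sup>+\<omega>. emeasure (K \<omega>) B * indicator A \<omega> \<partial>M)"
    using A_sets B by (subst disintegrate) (auto intro!: nn_integral_cong simp: indicator_def)
  also have "\<dots> = (\<integral>\<^sup>+\<omega>. emeasure (K \<omega>) B \<partial>M) * (\<integral>\<^sup>+\<omega>. indicator A \<omega> \<partial>M)"
    by (rule nn_integral_indep_set_mult[OF indep_past_future sigma_algebra_past_alg
        sigma_algebra_future_alg K_past borel_measurable_indicator[OF A]])
  also have "\<dots> = emeasure M A * emeasure \<rho> B"
    using A_sets \<rho>_B by (simp add: mult.commute)
  finally show ?thesis .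
qed

end

theorem proposition3p4:
  fixes M :: "'w measure"
    and F :: "'t::{linordered_ab_group_add,linorder_topology} \<Rightarrow> 't \<Rightarrow> 'w set set"
    and \<theta> :: "'t \<Rightarrow> 'w \<Rightarrow> 'w"
    and X :: "'c::polish_space set"
    and \<phi> :: "'t \<Rightarrow> 'w \<Rightarrow> 'c \<Rightarrow> 'c"
    and \<rho> :: "'c measure"
    and \<mu>\<rho> :: "('w \<times> 'c) measure"
  assumes time: "time_Z_or_R TYPE('t)"
    and rds: "memoryless_RDS M F \<theta> X \<phi>"
    and stat: "stationary M X \<phi> \<rho>"
    and mu_inv: "invariant_measure M X \<theta> \<phi> \<mu>\<rho>"
    and mu_past: "past_measurable M F X \<mu>\<rho>"
    and mu_marg: "distr \<mu>\<rho> (restrict_space borel X) snd = \<rho>"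
    and mu_unique: "\<And>\<nu>. invariant_measure M X \<theta> \<phi> \<nu> \<Longrightarrow> past_measurable M F X \<nu> \<Longrightarrow>
                      distr \<nu> (restrict_space borel X) snd = \<rho> \<Longrightarrow> \<nu> = \<mu>\<rho>"
  shows "Theta_invariant_prob M X \<theta> \<phi> \<mu>\<rho> \<and>
         (\<forall>A\<in>sets (sigma (space M) (future_alg M F 0) \<Otimes>\<^sub>M restrict_space borel X).
            emeasure \<mu>\<rho> A = emeasure (restr_to_subalg M (sigma (space M) (future_alg M F 0)) \<Otimes>\<^sub>M \<rho>) A) \<and>
         (\<forall>\<mu>'. Theta_invariant_prob M X \<theta> \<phi> \<mu>' \<and>
            (\<forall>A\<in>sets (sigma (space M) (future_alg M F 0) \<Otimes>\<^sub>M restrict_space borel X).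
               emeasure \<mu>' A = emeasure (restr_to_subalg M (sigma (space M) (future_alg M F 0)) \<Otimes>\<^sub>M \<rho>) A)
            \<longrightarrow> \<mu>' = \<mu>\<rho>)"
proof -
  interpret memoryless_rds M F \<theta> X \<phi> using rds by (rule memoryless_rds.intro)
  have \<rho>: "sigma_finite_measure \<rho>" "sets \<rho> = sets borel_X"
    using stat prob_space_imp_sigma_finite unfolding stationary_def by auto
  have \<mu>\<rho>: "Theta_invariant_prob M X \<theta> \<phi> \<mu>\<rho>"
    using mu_inv unfolding invariant_measure_def by blast
  then have sets_\<mu>\<rho>: "sets \<mu>\<rho> = sets (M \<Otimes>\<^sub>M \<rho>)"
    using \<rho>(2) by (simp add: Theta_invariant_prob_def cong: sets_pair_measure_cong)
  have on_future: "emeasure \<mu>\<rho> A = emeasure (restr_to_subalg M future \<Otimes>\<^sub>M \<rho>) A"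
    if "A \<in> sets (future \<Otimes>\<^sub>M borel_X)" for A
    using emeasure_future_Times[OF mu_past _ mu_marg] sets_\<mu>\<rho> \<rho>(2) that
    by (intro emeasure_eq_pair_measure_on_subalgebra[OF prob_space_axioms subalgebra_future \<rho>(1)])
       (simp_all cong: sets_pair_measure_cong)
  have unique: "\<mu>' = \<mu>\<rho>" if \<mu>': "Theta_invariant_prob M X \<theta> \<phi> \<mu>'"
    and \<mu>'_future: "\<forall>A\<in>sets (future \<Otimes>\<^sub>M borel_X). emeasure \<mu>' A = emeasure (restr_to_subalg M future \<Otimes>\<^sub>M \<rho>) A"
    for \<mu>'
    using \<mu>'_future on_future by (intro Theta_invariant_eqI_future[OF \<mu>' \<mu>\<rho>]) simp
  show ?thesis
    using \<mu>\<rho> on_future unique by blast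
qed

end
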